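(* There is an absolute constant $c>0$ such that for all $\varepsilon,\delta\in(0,1)$ the following holds: any sublinear algorithm which, for every finite input multiset $A\subset\mathbb{R}^d$, outputs a $(1+\varepsilon)$-approximate mean of $A$ with probability at least $1-\delta$ must sample at least $c\,\varepsilon^{-1}\log\delta^{-1}$ points.
   Context: For a finite multiset $A\subset\mathbb{R}^d$ with $|A|=n$, let $\mathrm{Opt}=\min_{x\in\mathbb{R}^d}\sum_{p\in A}\|p-x\|^2$. A point $x$ is a $(1+\varepsilon)$-approximate mean of $A$ if $\sum_{p\in A}\|p-x\|^2\le(1+\varepsilon)\mathrm{Opt}$. A sublinear algorithm accesses the input $A$ only by drawing points independently and uniformly at random from $A$ (it may use internal randomness); its output depends only on the sampled points and its internal randomness. *)

theory Defs
  imports "HOL-Analysis.Analysis" "HOL-Probability.Probability" "HOL-Library.Multiset"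
begin

text \<open>Points of R^d are represented as functions nat => real vanishing outside {..<d}.\<close>

definition Rd :: "nat \<Rightarrow> (nat \<Rightarrow> real) set" where
  "Rd d = {x. \<forall>i\<ge>d. x i = 0}"

definition sqdist :: "nat \<Rightarrow> (nat \<Rightarrow> real) \<Rightarrow> (nat \<Rightarrow> real) \<Rightarrow> real" where
  "sqdist d p x = (\<Sum>i<d. (p i - x i)\<^sup>2)"

definition cost :: "nat \<Rightarrow> (nat \<Rightarrow> real) multiset \<Rightarrow> (nat \<Rightarrow> real) \<Rightarrow> real" where
  "cost d A x = sum_mset (image_mset (\<lambda>p. sqdist d p x) A)"

definition Opt :: "nat \<Rightarrow> (nat \<Rightarrow> real) multiset \<Rightarrow> real" where
  "Opt d A = (INF x\<in>Rd d. cost d A x)"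

definition approx_mean :: "nat \<Rightarrow> real \<Rightarrow> (nat \<Rightarrow> real) multiset \<Rightarrow> (nat \<Rightarrow> real) \<Rightarrow> bool" where
  "approx_mean d eps A x \<longleftrightarrow> x \<in> Rd d \<and> cost d A x \<le> (1 + eps) * Opt d A"

text \<open>A sublinear algorithm drawing m samples: a Markov kernel from the list of
  m i.i.d. uniform samples of A to a probability distribution over outputs (internal randomness).\<close>
definition success_prob ::
  "nat \<Rightarrow> real \<Rightarrow> nat \<Rightarrow> ((nat \<Rightarrow> real) list \<Rightarrow> (nat \<Rightarrow> real) measure)
     \<Rightarrow> (nat \<Rightarrow> real) multiset \<Rightarrow> real" where
  "success_prob d eps m alg A =
     measure_pmf.expectation (replicate_pmf m (pmf_of_multiset A))
       (\<lambda>xs. measure (alg xs) {x. approx_mean d eps A x})"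

end

theory Submission
  imports Defs
begin

text \<open>Take the input with k copies of the point t e_1 and n - k copies of the origin, where
  p = k/n lies just above eps/(1 + eps). With probability (1 - p)^m every sample is the origin,
  and on that sample the output distribution does not depend on t. A (1 + eps)-approximate mean x
  must satisfy (x_0 - p t)^2 \<le> eps p (1 - p) t^2, and since eps p (1 - p) < p^2 these windows
  around p t are pairwise disjoint for geometrically growing t. So for some scale the algorithm
  almost never succeeds on the all-origin sample, forcing (1 - p)^m \<le> delta; with
  p \<le> 2 eps/(1 + 2 eps) this gives m \<ge> ln (1/delta) / (2 eps).\<close>

lemma pmf_replicate_pmf_replicate:
  "pmf (replicate_pmf m P) (replicate m a) = pmf P a ^ m"
proof (induction m)
  case 0
  then show ?case by simp
next
  case (Suc m)
  have "replicate_pmf (Suc m) P = map_pmf (\<lambda>(x, xs). x # xs) (pair_pmf P (replicate_pmf m P))"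
    by (simp add: pair_pmf_def map_pmf_def bind_assoc_pmf bind_return_pmf)
  moreover have "inj (\<lambda>(x::'a, xs). x # xs)"
    by (auto simp: inj_def)
  ultimately have "pmf (replicate_pmf (Suc m) P) (replicate (Suc m) a)
      = pmf (pair_pmf P (replicate_pmf m P)) (a, replicate m a)"
    using pmf_map_inj'[of "\<lambda>(x, xs). x # xs" _ "(a, replicate m a)"] by simp
  then show ?case
    using Suc by (simp add: pmf_pair)
qed

lemma expectation_le_one_minus_pmf:
  fixes f :: "'a \<Rightarrow> real"
  assumes "\<And>x. 0 \<le> f x" "\<And>x. f x \<le> 1"
  shows "measure_pmf.expectation P f \<le> 1 - pmf P z * (1 - f z)"
proof -
  define g where "g x = 1 - indicator {z} x * (1 - f z)" for x
  have integrable: "integrable (measure_pmf P) h" if "\<And>x. \<bar>h x\<bar> \<le> 1" for h :: "'a \<Rightarrow> real"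
    by (rule measure_pmf.integrable_const_bound[where B = 1]) (auto simp: that)
  have "measure_pmf.expectation P f \<le> measure_pmf.expectation P g"
    using assms by (intro integral_mono integrable) (auto simp: g_def indicator_def abs_le_iff)
  also have "\<dots> = 1 - (\<integral>x. indicator {z} x * (1 - f z) \<partial>P)"
    unfolding g_def using assms
    by (subst Bochner_Integration.integral_diff)
       (auto intro!: integrable simp: indicator_def abs_le_iff)
  also have "(\<integral>x. indicator {z} x * (1 - f z) \<partial>P) = pmf P z * (1 - f z)"
    by (simp add: measure_pmf_single)
  finally show ?thesis .
qed

lemma (in finite_measure) measure_disjoint_family_LIMSEQ_zero:
  assumes "range T \<subseteq> sets M" "disjoint_family T"
  shows "(\<lambda>j. measure M (T j)) \<longlonglongrightarrow> 0"
  using finite_measure_UNION[OF assms] by (intro summable_LIMSEQ_zero sums_summable)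

lemma disjoint_family_geometric_intervals:
  fixes R lo hi :: real
  assumes "0 < lo" "1 \<le> R" "hi < R * lo"
  shows "disjoint_family (\<lambda>j. {R ^ j * lo .. R ^ j * hi})"
proof -
  have "{R ^ i * lo .. R ^ i * hi} \<inter> {R ^ j * lo .. R ^ j * hi} = {}" if "i < j" for i j
  proof -
    have "R ^ i * hi < R ^ i * (R * lo)"
      using assms by simp
    also have "\<dots> = R ^ Suc i * lo"
      by simp
    also have "\<dots> \<le> R ^ j * lo"
      using assms that by (intro mult_right_mono power_increasing) auto
    finally show ?thesis
      by auto
  qed
  then show ?thesis
    unfolding disjoint_family_on_def by (metis inf_commute linorder_neqE_nat)
qed

lemma exists_fraction_between:
  fixes a b :: real
  assumes "0 \<le> a" "a < b" "b \<le> 1"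
  obtains k n :: nat where "0 < k" "k < n" "a < real k / real n" "real k / real n < b"
proof -
  obtain r where "r \<in> \<rat>" "a < r" "r < b"
    using Rats_dense_in_real[OF \<open>a < b\<close>] by blast
  moreover from \<open>r \<in> \<rat>\<close> obtain k n :: nat where "n \<noteq> 0" "\<bar>r\<bar> = real k / real n"
    by (rule Rats_abs_nat_div_natE)
  ultimately have fraction: "a < real k / real n" "real k / real n < b"
    using \<open>0 \<le> a\<close> by auto
  show ?thesis
  proof (rule that[OF _ _ fraction])
    show "0 < k"
      using fraction(1) \<open>0 \<le> a\<close> by (cases "k = 0") auto
    have "real k / real n < 1"
      using fraction(2) \<open>b \<le> 1\<close> by linarith
    then show "k < n"
      using \<open>n \<noteq> 0\<close> by (simp add: divide_less_eq)
  qed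
qed

lemma ln_inverse_le_of_power_le:
  fixes x delta :: real
  assumes "0 < x" "0 < delta" "(1 / (1 + x)) ^ m \<le> delta"
  shows "ln (1 / delta) \<le> real m * x"
proof -
  have "ln (1 / delta) \<le> ln ((1 + x) ^ m)"
    using assms by (simp add: power_one_over field_simps)
  also have "\<dots> = real m * ln (1 + x)"
    using assms by (simp add: ln_realpow)
  also have "\<dots> \<le> real m * x"
    using assms by (intro mult_left_mono ln_add_one_self_le_self) auto
  finally show ?thesis .
qed

definition axis_point :: "real \<Rightarrow> nat \<Rightarrow> real" where
  "axis_point a = (\<lambda>i. if i = 0 then a else 0)"

lemma axis_point_in_Rd: "1 \<le> d \<Longrightarrow> axis_point a \<in> Rd d"
  by (auto simp: axis_point_def Rd_def)

lemma axis_point_eq_iff: "axis_point a = axis_point b \<longleftrightarrow> a = b"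
  by (auto simp: axis_point_def fun_eq_iff)

lemma sqdist_axis_point_ge:
  assumes "1 \<le> d"
  shows "(a - x 0)\<^sup>2 \<le> sqdist d (axis_point a) x"
proof -
  obtain d' where d: "d = Suc d'"
    using assms by (cases d) auto
  show ?thesis
    unfolding sqdist_def d sum.lessThan_Suc_shift by (auto simp: axis_point_def intro!: sum_nonneg)
qed

lemma sqdist_axis_points:
  assumes "1 \<le> d"
  shows "sqdist d (axis_point a) (axis_point b) = (a - b)\<^sup>2"
proof -
  obtain d' where d: "d = Suc d'"
    using assms by (cases d) auto
  show ?thesis
    unfolding sqdist_def d sum.lessThan_Suc_shift by (simp add: axis_point_def)
qed

lemma cost_nonneg: "0 \<le> cost d A x"
  unfolding cost_def sqdist_def by (induction A) (auto intro!: add_nonneg_nonneg sum_nonneg)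

definition two_point :: "nat \<Rightarrow> nat \<Rightarrow> real \<Rightarrow> (nat \<Rightarrow> real) multiset" where
  "two_point k n t = replicate_mset k (axis_point t) + replicate_mset (n - k) (axis_point 0)"

lemma cost_two_point:
  "cost d (two_point k n t) x
     = real k * sqdist d (axis_point t) x + real (n - k) * sqdist d (axis_point 0) x"
  by (simp add: cost_def two_point_def sum_mset_replicate_mset)

lemma weighted_sq_dev_eq: "p * (t - y)\<^sup>2 + (1 - p) * y\<^sup>2 = p * (1 - p) * t\<^sup>2 + (y - p * t)\<^sup>2"
  for p t y :: real
  by (simp add: algebra_simps power2_eq_square)

lemma two_point_weights:
  assumes "k \<le> n"
  shows "real k * a + real (n - k) * b = real n * (real k / real n * a + (1 - real k / real n) * b)"
  using assms by (cases "n = 0") (simp_all add: field_simps of_nat_diff)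

lemma cost_two_point_ge:
  assumes "1 \<le> d" "k \<le> n"
  defines "p \<equiv> real k / real n"
  shows "real n * (p * (1 - p) * t\<^sup>2 + (x 0 - p * t)\<^sup>2) \<le> cost d (two_point k n t) x"
proof -
  have "real n * (p * (1 - p) * t\<^sup>2 + (x 0 - p * t)\<^sup>2)
      = real k * (t - x 0)\<^sup>2 + real (n - k) * (x 0)\<^sup>2"
    unfolding two_point_weights[OF assms(2)] p_def[symmetric] weighted_sq_dev_eq ..
  also have "\<dots> \<le> cost d (two_point k n t) x"
    unfolding cost_two_point
    using sqdist_axis_point_ge[OF assms(1), of t x] sqdist_axis_point_ge[OF assms(1), of 0 x]
    by (intro add_mono mult_left_mono) simp_all
  finally show ?thesis .
qed

lemma Opt_two_point_le:
  assumes "1 \<le> d" "k \<le> n"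
  defines "p \<equiv> real k / real n"
  shows "Opt d (two_point k n t) \<le> real n * (p * (1 - p) * t\<^sup>2)"
proof -
  have "Opt d (two_point k n t) \<le> cost d (two_point k n t) (axis_point (p * t))"
    unfolding Opt_def using cost_nonneg axis_point_in_Rd[OF assms(1)]
    by (intro cINF_lower bdd_belowI[where m = 0]) auto
  also have "\<dots> = real n * (p * (t - p * t)\<^sup>2 + (1 - p) * (p * t)\<^sup>2)"
    unfolding cost_two_point sqdist_axis_points[OF assms(1)] two_point_weights[OF assms(2)]
      p_def[symmetric] by simp
  also have "\<dots> = real n * (p * (1 - p) * t\<^sup>2)"
    unfolding weighted_sq_dev_eq by simp
  finally show ?thesis .
qed

lemma approx_mean_two_point:
  assumes "1 \<le> d" "k \<le> n" "0 < n" "0 \<le> eps" "approx_mean d eps (two_point k n t) x"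
  defines "p \<equiv> real k / real n"
  shows "(x 0 - p * t)\<^sup>2 \<le> eps * (p * (1 - p) * t\<^sup>2)"
proof -
  have "real n * (p * (1 - p) * t\<^sup>2 + (x 0 - p * t)\<^sup>2) \<le> cost d (two_point k n t) x"
    using cost_two_point_ge[OF assms(1,2)] unfolding p_def .
  also have "\<dots> \<le> (1 + eps) * Opt d (two_point k n t)"
    using assms(5) unfolding approx_mean_def by blast
  also have "\<dots> \<le> (1 + eps) * (real n * (p * (1 - p) * t\<^sup>2))"
    using Opt_two_point_le[OF assms(1,2), of t] assms(4) unfolding p_def[symmetric]
    by (intro mult_left_mono) auto
  finally have "real n * (p * (1 - p) * t\<^sup>2 + (x 0 - p * t)\<^sup>2)
      \<le> real n * ((1 + eps) * (p * (1 - p) * t\<^sup>2))"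
    by (simp only: mult.left_commute)
  then have "p * (1 - p) * t\<^sup>2 + (x 0 - p * t)\<^sup>2 \<le> (1 + eps) * (p * (1 - p) * t\<^sup>2)"
    using \<open>0 < n\<close> by simp
  then show ?thesis
    by (simp add: algebra_simps)
qed

lemma approx_mean_two_point_coord_interval:
  assumes "1 \<le> d" "k \<le> n" "0 < n" "0 \<le> eps" "0 \<le> t" "approx_mean d eps (two_point k n t) x"
  defines "p \<equiv> real k / real n"
  defines "s \<equiv> sqrt (eps * p * (1 - p))"
  shows "x 0 \<in> {t * (p - s) .. t * (p + s)}"
proof -
  have "0 \<le> p" "p \<le> 1"
    using assms(2,3) unfolding p_def by auto
  then have "0 \<le> eps * p * (1 - p)"
    using assms(4) by simp
  then have "0 \<le> s" "s\<^sup>2 = eps * p * (1 - p)"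
    unfolding s_def by simp_all
  moreover have "(x 0 - p * t)\<^sup>2 \<le> (s * t)\<^sup>2"
    using approx_mean_two_point[OF assms(1-4,6)] unfolding p_def[symmetric]
    using \<open>s\<^sup>2 = eps * p * (1 - p)\<close> by (simp add: power_mult_distrib mult.assoc)
  then have "\<bar>x 0 - p * t\<bar> \<le> \<bar>s * t\<bar>"
    by (simp only: abs_le_square_iff)
  ultimately have "\<bar>x 0 - p * t\<bar> \<le> s * t"
    using assms(5) by simp
  then show ?thesis
    by (auto simp: abs_le_iff algebra_simps)
qed

lemma two_point_nonempty: "k \<le> n \<Longrightarrow> 0 < n \<Longrightarrow> two_point k n t \<noteq> {#}"
  by (cases "k = n") (simp_all add: two_point_def)

lemma set_two_point_subset_Rd: "1 \<le> d \<Longrightarrow> set_mset (two_point k n t) \<subseteq> Rd d"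
  by (auto simp: two_point_def axis_point_in_Rd)

lemma success_prob_two_point_le:
  assumes "k \<le> n" "0 < n" "t \<noteq> 0" "\<And>xs. prob_space (alg xs)"
  defines "p \<equiv> real k / real n"
  shows "success_prob d eps m alg (two_point k n t)
    \<le> 1 - (1 - p) ^ m * (1 - measure (alg (replicate m (axis_point 0)))
                                      {x. approx_mean d eps (two_point k n t) x})"
proof -
  have "pmf (pmf_of_multiset (two_point k n t)) (axis_point 0) = 1 - p"
    using assms(1-3) two_point_nonempty[OF assms(1,2)]
    by (simp add: two_point_def axis_point_eq_iff p_def field_simps of_nat_diff)
  then have "pmf (replicate_pmf m (pmf_of_multiset (two_point k n t))) (replicate m (axis_point 0))
      = (1 - p) ^ m"
    by (simp add: pmf_replicate_pmf_replicate)
  then show ?thesis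
    unfolding success_prob_def using prob_space.prob_le_1[OF assms(4)]
    by (metis expectation_le_one_minus_pmf measure_nonneg)
qed

lemma approx_mean_two_point_disjoint_scales:
  assumes "1 \<le> d" "0 < eps" "0 < k" "k < n" "eps / (1 + eps) < real k / real n"
  obtains t :: "nat \<Rightarrow> real" and T :: "nat \<Rightarrow> (nat \<Rightarrow> real) set"
  where "\<And>j. 0 < t j" "disjoint_family T" "\<And>j. T j \<in> sets (\<Pi>\<^sub>M i\<in>UNIV. (borel :: real measure))"
    "\<And>j. {x. approx_mean d eps (two_point k n (t j)) x} \<subseteq> T j"
proof -
  define p where "p = real k / real n"
  define s where "s = sqrt (eps * p * (1 - p))"
  define R where "R = (p + s) / (p - s) + 1"
  define T where "T j = (\<lambda>x :: nat \<Rightarrow> real. x 0) -` {R ^ j * (p - s) .. R ^ j * (p + s)}" for j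
  have "0 < p" "p < 1"
    using assms(3,4) by (simp_all add: p_def)
  moreover have "eps * (1 - p) < p"
    using assms(2,5) unfolding p_def[symmetric] by (simp add: divide_less_eq algebra_simps)
  ultimately have "0 \<le> s" "s\<^sup>2 < p\<^sup>2"
    using assms(2) unfolding s_def by (simp_all add: power2_eq_square)
  then have "s < p"
    using \<open>0 < p\<close> by (simp add: power_less_imp_less_base)
  moreover have "R * (p - s) = (p + s) + (p - s)"
    using \<open>s < p\<close> unfolding R_def distrib_right by simp
  ultimately have "1 \<le> R" "p + s < R * (p - s)"
    using \<open>0 \<le> s\<close> by (simp_all add: R_def)
  show ?thesis
  proof (rule that[of "\<lambda>j. R ^ j" T])
    show "0 < R ^ j" for j
      using \<open>1 \<le> R\<close> by simp
    show "disjoint_family T"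
      unfolding T_def using \<open>s < p\<close> \<open>1 \<le> R\<close> \<open>p + s < R * (p - s)\<close>
      by (intro disjoint_family_on_vimageI disjoint_family_geometric_intervals) auto
    have "(\<lambda>x. x 0) -` {R ^ j * (p - s) .. R ^ j * (p + s)} \<inter> space (\<Pi>\<^sub>M i\<in>UNIV. (borel :: real measure))
        \<in> sets (\<Pi>\<^sub>M i\<in>UNIV. (borel :: real measure))" for j
      by (rule measurable_sets[OF measurable_component_singleton]) auto
    then show "T j \<in> sets (\<Pi>\<^sub>M i\<in>UNIV. (borel :: real measure))" for j
      unfolding T_def by (simp add: space_PiM)
    show "{x. approx_mean d eps (two_point k n (R ^ j)) x} \<subseteq> T j" for j
      using approx_mean_two_point_coord_interval[OF assms(1), of k n eps "R ^ j"] assms(2,4)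
        \<open>1 \<le> R\<close> unfolding T_def p_def s_def by (auto simp: mult.commute)
  qed
qed

lemma prob_all_samples_at_origin_le:
  fixes alg :: "(nat \<Rightarrow> real) list \<Rightarrow> (nat \<Rightarrow> real) measure"
  assumes "1 \<le> d" "0 < eps" "0 < k" "k < n" "eps / (1 + eps) < real k / real n"
    and alg_prob: "\<And>xs. prob_space (alg xs)"
    and alg_sets: "\<And>xs. sets (alg xs) = sets (\<Pi>\<^sub>M i\<in>UNIV. (borel :: real measure))"
    and success: "\<And>A. A \<noteq> {#} \<Longrightarrow> set_mset A \<subseteq> Rd d \<Longrightarrow> 1 - delta \<le> success_prob d eps m alg A"
  shows "(1 - real k / real n) ^ m \<le> delta"
proof -
  define p where "p = real k / real n"
  define M where "M = alg (replicate m (axis_point 0))"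
  interpret M: prob_space M
    unfolding M_def by (rule alg_prob)
  obtain t :: "nat \<Rightarrow> real" and T :: "nat \<Rightarrow> (nat \<Rightarrow> real) set" where t_pos: "\<And>j. 0 < t j" and "disjoint_family T"
    and T_sets: "\<And>j. T j \<in> sets (\<Pi>\<^sub>M i\<in>UNIV. (borel :: real measure))"
    and approx_in_T: "\<And>j. {x. approx_mean d eps (two_point k n (t j)) x} \<subseteq> T j"
    using approx_mean_two_point_disjoint_scales[OF assms(1-5)] by blast
  have "range T \<subseteq> sets M"
    using T_sets unfolding M_def alg_sets by auto
  then have "(\<lambda>j. measure M (T j)) \<longlonglongrightarrow> 0"
    using \<open>disjoint_family T\<close> by (rule M.measure_disjoint_family_LIMSEQ_zero)
  then have "(\<lambda>j. (1 - p) ^ m * (1 - measure M (T j))) \<longlonglongrightarrow> (1 - p) ^ m"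
    by (auto intro!: tendsto_eq_intros)
  moreover have "(1 - p) ^ m * (1 - measure M (T j)) \<le> delta" for j
  proof -
    let ?A = "two_point k n (t j)"
    have "1 - delta \<le> success_prob d eps m alg ?A"
      using assms(1,4) by (intro success two_point_nonempty set_two_point_subset_Rd) auto
    also have "\<dots> \<le> 1 - (1 - p) ^ m * (1 - measure M {x. approx_mean d eps ?A x})"
      using assms(4) t_pos[of j] unfolding M_def p_def
      by (intro success_prob_two_point_le alg_prob) auto
    also have "\<dots> \<le> 1 - (1 - p) ^ m * (1 - measure M (T j))"
      using approx_in_T[of j] \<open>range T \<subseteq> sets M\<close> assms(3,4)
      by (intro diff_left_mono mult_left_mono M.finite_measure_mono) (auto simp: p_def)
    finally show ?thesis
      by simp
  qed
  ultimately show ?thesis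
    unfolding p_def by (intro LIMSEQ_le_const2) auto
qed

theorem theorem5p1:
  shows "\<exists>c>0. \<forall>eps delta. 0 < eps \<and> eps < 1 \<and> 0 < delta \<and> delta < 1 \<longrightarrow>
     (\<forall>(d::nat) (m::nat) (alg :: (nat \<Rightarrow> real) list \<Rightarrow> (nat \<Rightarrow> real) measure).
        d \<ge> 1 \<longrightarrow>
        (\<forall>xs. prob_space (alg xs) \<and> sets (alg xs) = sets (\<Pi>\<^sub>M i\<in>UNIV. (borel :: real measure))) \<longrightarrow>
        (\<forall>A. A \<noteq> {#} \<longrightarrow> set_mset A \<subseteq> Rd d \<longrightarrow> success_prob d eps m alg A \<ge> 1 - delta) \<longrightarrow>
        real m \<ge> c * (1 / eps) * ln (1 / delta))"
proof (intro exI[of _ "1 / 2"] conjI allI impI)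
  fix eps delta :: real and d m :: nat and alg :: "(nat \<Rightarrow> real) list \<Rightarrow> (nat \<Rightarrow> real) measure"
  assume "0 < eps \<and> eps < 1 \<and> 0 < delta \<and> delta < 1" and "1 \<le> d"
    and alg: "\<forall>xs. prob_space (alg xs) \<and> sets (alg xs) = sets (\<Pi>\<^sub>M i\<in>UNIV. (borel :: real measure))"
    and success: "\<forall>A. A \<noteq> {#} \<longrightarrow> set_mset A \<subseteq> Rd d \<longrightarrow> success_prob d eps m alg A \<ge> 1 - delta"
  then have "0 < eps" "0 < delta"
    by auto
  then have "0 \<le> eps / (1 + eps)" "eps / (1 + eps) < 2 * eps / (1 + 2 * eps)"
    "2 * eps / (1 + 2 * eps) \<le> 1"
    by (simp_all add: field_simps)
  then obtain k n :: nat where "0 < k" "k < n"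
    and p_bounds: "eps / (1 + eps) < real k / real n" "real k / real n < 2 * eps / (1 + 2 * eps)"
    by (rule exists_fraction_between)
  have "(1 / (1 + 2 * eps)) ^ m \<le> (1 - real k / real n) ^ m"
    using p_bounds(2) \<open>0 < eps\<close> by (intro power_mono) (auto simp: field_simps)
  also have "\<dots> \<le> delta"
    by (rule prob_all_samples_at_origin_le[where alg = alg, OF \<open>1 \<le> d\<close> \<open>0 < eps\<close> \<open>0 < k\<close> \<open>k < n\<close> p_bounds(1)])
       (use alg success in auto)
  finally have "ln (1 / delta) \<le> real m * (2 * eps)"
    using \<open>0 < eps\<close> \<open>0 < delta\<close> by (intro ln_inverse_le_of_power_le) auto
  then show "1 / 2 * (1 / eps) * ln (1 / delta) \<le> real m"
    using \<open>0 < eps\<close> by (simp add: field_simps)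
qed simp

end
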